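(* There exists an instance of the throughput-constrained online resource allocation problem (a fixed choice of all primitives, with the horizon $T$ ranging over multiples of $K$) in which the Naive Primal-Dual Algorithm incurs linear regret, i.e. $\textsc{Reg}=V^\pi[\omega]-V^{\textsc{off}}[\omega]=\Omega(T)$, for any stepsize $\eta=O(1)$.
   Context: Model. There are $m$ resources and $n$ arrival types. Type $j\in[n]$ has an assignment cost vector $c_j\in\mathbb R^m$ and a set $\mathcal S_j\subseteq[m]$ of allowed resources. The horizon has $T$ periods partitioned into $K=\Theta(1)$ epochs ($T$ a multiple of $K$), epoch $k$ being periods $(k-1)T/K+1,\dots,kT/K$; $k^t$ denotes the epoch containing period $t$. In period $t$ one arrival of type $j^t$ occurs, $j^t$ i.i.d. with $\mathbb P(j^t=j)=p_j$; write $c^t=c_{j^t}$ and $\Lambda_j(t_1:t_2)=\sum_{t_1<\tau\le t_2}\mathbf 1\{j^\tau=j\}$. The decision-maker chooses $x^t\in\mathcal X^t=\{x\in\{0,1\}^m:\sum_ix_i\le1,\ x_i=0\ \forall i\notin\mathcal S_{j^t}\}$ at cost $\sum_ic^t_ix^t_i$. Each epoch $k$ and resource $i$ has a target $\rho_{ki}\in[0,1]$ and a convex $L$-Lipschitz deviation cost $g_{ki}:[0,1]\to\mathbb R_{\ge0}$ with $g_{ki}(\rho_{ki})=0$. The cost of a policy is $V^\pi[\omega]=\sum_{t}\sum_ic^t_ix^t_i+\frac TK\sum_{k}\sum_ik\,g_{ki}\big(\sum_{t\le kT/K}x^t_i/(kT/K)\big)$, and $V^{\textsc{off}}[\omega]$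 is the minimum of the same expression over all $x^t\in\mathcal X^t$, $t\in[T]$, chosen with full knowledge of $\omega=(j^1,\dots,j^T)$. Naive Primal-Dual Algorithm (stepsize $\eta=O(1)$, initial shadow prices $\mu^1\in\mathbb R^{K\times m}$): for each $t=1,\dots,T$, observe the arrival; choose $x^t\in\arg\min_{x\in\mathcal X^t}\sum_ix_i\big(c^t_i-\sum_{k\ge k^t}\mu^t_{ki}\big)$; for all $k\ge k^t$ and $i$ compute $a^t_{ki}\in\arg\min_{a\in[0,1]}g_{ki}(a)+\mu^t_{ki}a$; update $\mu^{t+1}_{ki}=\mu^t_{ki}+\eta(a^t_{ki}-x^t_i)$ for $k\ge k^t$. *)

theory Defs
  imports "HOL-Analysis.Analysis" "HOL-Library.FuncSet"
begin

text \<open>Resources are indexed by i < m, arrival types by j < n, periods by t in {1..T},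
  epochs by k in {1..K}.\<close>

record pd_instance =
  nres   :: nat
  ntyp   :: nat
  nep    :: nat
  cost   :: "nat \<Rightarrow> nat \<Rightarrow> real"          (* cost j i = (c_j)_i *)
  allowed :: "nat \<Rightarrow> nat set"
  prob   :: "nat \<Rightarrow> real"
  target :: "nat \<Rightarrow> nat \<Rightarrow> real"
  dev    :: "nat \<Rightarrow> nat \<Rightarrow> real \<Rightarrow> real"
  lip    :: real

definition valid_instance :: "pd_instance \<Rightarrow> bool" where
  "valid_instance I \<longleftrightarrow>
     nres I \<ge> 1 \<and> ntyp I \<ge> 1 \<and> nep I \<ge> 1 \<and> lip I \<ge> 0 \<and>
     (\<forall>j<ntyp I. allowed I j \<subseteq> {..<nres I}) \<and>
     (\<forall>j<ntyp I. prob I j \<ge> 0) \<and> (\<Sum>j<ntyp I. prob I j) = 1 \<and>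
     (\<forall>k\<in>{1..nep I}. \<forall>i<nres I.
        target I k i \<in> {0..1} \<and>
        convex_on {0..1} (dev I k i) \<and>
        (\<forall>a\<in>{0..1}. \<forall>b\<in>{0..1}. \<bar>dev I k i a - dev I k i b\<bar> \<le> lip I * \<bar>a - b\<bar>) \<and>
        (\<forall>a\<in>{0..1}. dev I k i a \<ge> 0) \<and>
        dev I k i (target I k i) = 0)"

text \<open>Epoch k^t containing period t (T a multiple of K).\<close>
definition epoch :: "pd_instance \<Rightarrow> nat \<Rightarrow> nat \<Rightarrow> nat" where
  "epoch I T t = (t - 1) div (T div nep I) + 1"

text \<open>Sample paths omega = (j^1,...,j^T), as extensional functions on {1..T}.\<close>
definition arrivals :: "pd_instance \<Rightarrow> nat \<Rightarrow> (nat \<Rightarrow> nat) set" where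
  "arrivals I T = {1..T} \<rightarrow>\<^sub>E {..<ntyp I}"

definition path_prob :: "pd_instance \<Rightarrow> nat \<Rightarrow> (nat \<Rightarrow> nat) \<Rightarrow> real" where
  "path_prob I T \<omega> = (\<Prod>t\<in>{1..T}. prob I (\<omega> t))"

text \<open>x in X^t (x given as a function of the resource index).\<close>
definition feasible :: "pd_instance \<Rightarrow> (nat \<Rightarrow> nat) \<Rightarrow> nat \<Rightarrow> (nat \<Rightarrow> real) \<Rightarrow> bool" where
  "feasible I \<omega> t x \<longleftrightarrow>
     (\<forall>i<nres I. x i \<in> {0, 1}) \<and> (\<Sum>i<nres I. x i) \<le> 1 \<and>
     (\<forall>i<nres I. i \<notin> allowed I (\<omega> t) \<longrightarrow> x i = 0)"

definition total_cost :: "pd_instance \<Rightarrow> nat \<Rightarrow> (nat \<Rightarrow> nat) \<Rightarrow> (nat \<Rightarrow> nat \<Rightarrow> real) \<Rightarrow> real" where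
  "total_cost I T \<omega> x =
     (\<Sum>t\<in>{1..T}. \<Sum>i<nres I. cost I (\<omega> t) i * x t i)
     + real T / real (nep I) *
       (\<Sum>k\<in>{1..nep I}. \<Sum>i<nres I.
          real k * dev I k i ((\<Sum>t\<in>{1..k * (T div nep I)}. x t i) / (real k * real T / real (nep I))))"

definition offline_opt :: "pd_instance \<Rightarrow> nat \<Rightarrow> (nat \<Rightarrow> nat) \<Rightarrow> real" where
  "offline_opt I T \<omega> =
     Inf {total_cost I T \<omega> x | x. \<forall>t\<in>{1..T}. feasible I \<omega> t (x t)}"

text \<open>A run (x, a, mu) of the Naive Primal-Dual Algorithm on omega with stepsize eta and
  initial prices mu1, with arbitrary tie-breaking in the argmins.
  x t i = x^t_i, a t k i = a^t_{ki}, mu t k i = mu^t_{ki}.\<close>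
definition is_run ::
  "pd_instance \<Rightarrow> nat \<Rightarrow> real \<Rightarrow> (nat \<Rightarrow> nat \<Rightarrow> real) \<Rightarrow> (nat \<Rightarrow> nat) \<Rightarrow>
   (nat \<Rightarrow> nat \<Rightarrow> real) \<times> (nat \<Rightarrow> nat \<Rightarrow> nat \<Rightarrow> real) \<times> (nat \<Rightarrow> nat \<Rightarrow> nat \<Rightarrow> real) \<Rightarrow> bool" where
  "is_run I T \<eta> \<mu>1 \<omega> r \<longleftrightarrow>
     (case r of (x, a, \<mu>) \<Rightarrow>
       (\<forall>k\<in>{1..nep I}. \<forall>i<nres I. \<mu> 1 k i = \<mu>1 k i) \<and>
       (\<forall>t\<in>{1..T}.
          feasible I \<omega> t (x t) \<and>
          (\<forall>y. feasible I \<omega> t y \<longrightarrow>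
             (\<Sum>i<nres I. x t i * (cost I (\<omega> t) i - (\<Sum>k\<in>{epoch I T t..nep I}. \<mu> t k i)))
             \<le> (\<Sum>i<nres I. y i * (cost I (\<omega> t) i - (\<Sum>k\<in>{epoch I T t..nep I}. \<mu> t k i)))) \<and>
          (\<forall>k\<in>{epoch I T t..nep I}. \<forall>i<nres I.
             a t k i \<in> {0..1} \<and>
             (\<forall>b\<in>{0..1}. dev I k i (a t k i) + \<mu> t k i * a t k i \<le> dev I k i b + \<mu> t k i * b) \<and>
             \<mu> (Suc t) k i = \<mu> t k i + \<eta> * (a t k i - x t i)) \<and>
          (\<forall>k\<in>{1..<epoch I T t}. \<forall>i<nres I. \<mu> (Suc t) k i = \<mu> t k i)))"

definition expected_regret ::
  "pd_instance \<Rightarrow> nat \<Rightarrow> ((nat \<Rightarrow> nat) \<Rightarrow>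
     (nat \<Rightarrow> nat \<Rightarrow> real) \<times> (nat \<Rightarrow> nat \<Rightarrow> nat \<Rightarrow> real) \<times> (nat \<Rightarrow> nat \<Rightarrow> nat \<Rightarrow> real)) \<Rightarrow> real" where
  "expected_regret I T run =
     (\<Sum>\<omega>\<in>arrivals I T. path_prob I T \<omega> *
        (total_cost I T \<omega> (fst (run \<omega>)) - offline_opt I T \<omega>))"

end

theory Submission
  imports Defs
begin

text \<open>The instance has one resource, one arrival type, zero assignment costs and two epochs of
  length h. Epoch 1 penalises any shortfall from full utilisation, \<open>g\<^sub>1(a) = 1 - a\<close>;
  epoch 2 asks for cumulative utilisation 1/2, \<open>g\<^sub>2(a) = |1/2 - a|\<close>. Serving exactly in
  epoch 1 costs nothing, while every allocation made in epoch 2 costs at least 1: it either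
  leaves a shortfall in epoch 1 or overshoots the target of epoch 2.

  Every shadow price of the algorithm stays bounded by \<open>|\<mu>\<^sup>1| + L + \<eta>\<close>: a price above L
  (below -L) forces the dual response 0 (resp. 1), which pushes it back. During
  epoch 2, idling is chosen only when the epoch-2 price is nonpositive, and then the dual response is
  at least 1/2, so the price rises by at least \<open>\<eta>/2\<close>; serving lowers it by at most \<open>\<eta>\<close>.
  Since the price cannot drift by more than a constant, the algorithm serves in a constant
  fraction of epoch 2, which is linear regret.\<close>

lemma sum_path_prob_arrivals:
  assumes "valid_instance I"
  shows "(\<Sum>\<omega>\<in>arrivals I T. path_prob I T \<omega>) = 1"
proof -
  have "(\<Sum>\<omega>\<in>arrivals I T. path_prob I T \<omega>) = (\<Prod>t\<in>{1..T}. \<Sum>j<ntyp I. prob I j)"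
    unfolding arrivals_def path_prob_def by (rule prod_sum_PiE[symmetric]) auto
  also have "\<dots> = 1"
    using assms by (simp add: valid_instance_def)
  finally show ?thesis .
qed

lemma path_prob_nonneg:
  assumes "valid_instance I" and "\<omega> \<in> arrivals I T"
  shows "path_prob I T \<omega> \<ge> 0"
  using assms unfolding path_prob_def arrivals_def valid_instance_def
  by (auto intro!: prod_nonneg)

lemma expected_regret_ge:
  assumes "valid_instance I"
    and "\<And>\<omega>. \<omega> \<in> arrivals I T \<Longrightarrow> c \<le> total_cost I T \<omega> (fst (run \<omega>)) - offline_opt I T \<omega>"
  shows "c \<le> expected_regret I T run"
proof -
  have "c = (\<Sum>\<omega>\<in>arrivals I T. path_prob I T \<omega> * c)"
    using sum_path_prob_arrivals[OF assms(1)] by (simp add: sum_distrib_right[symmetric])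
  also have "\<dots> \<le> expected_regret I T run"
    unfolding expected_regret_def
    by (intro sum_mono mult_left_mono assms(2) path_prob_nonneg[OF assms(1)])
  finally show ?thesis .
qed

lemma argmin_eq_0_if_price_gt_lipschitz:
  fixes g :: "real \<Rightarrow> real"
  assumes lip: "\<forall>a\<in>{0..1}. \<forall>b\<in>{0..1}. \<bar>g a - g b\<bar> \<le> L * \<bar>a - b\<bar>"
    and a: "a \<in> {0..1}" and argmin: "\<forall>b\<in>{0..1}. g a + \<mu> * a \<le> g b + \<mu> * b"
    and "L < \<mu>"
  shows "a = 0"
proof -
  have "g 0 - g a \<le> L * a" using lip a by force
  moreover have "g a + \<mu> * a \<le> g 0" using argmin by force
  ultimately have "(\<mu> - L) * a \<le> 0" by (simp add: algebra_simps)
  then show ?thesis using a \<open>L < \<mu>\<close> by (simp add: mult_le_0_iff)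
qed

lemma argmin_eq_1_if_price_lt_neg_lipschitz:
  fixes g :: "real \<Rightarrow> real"
  assumes lip: "\<forall>a\<in>{0..1}. \<forall>b\<in>{0..1}. \<bar>g a - g b\<bar> \<le> L * \<bar>a - b\<bar>"
    and a: "a \<in> {0..1}" and argmin: "\<forall>b\<in>{0..1}. g a + \<mu> * a \<le> g b + \<mu> * b"
    and "\<mu> < - L"
  shows "a = 1"
proof -
  have "g 1 - g a \<le> L * (1 - a)" using lip[rule_format, of 1 a] a by simp
  moreover have "g a + \<mu> * a \<le> g 1 + \<mu>" using argmin[rule_format, of 1] by simp
  ultimately have "(\<mu> + L) * (1 - a) \<ge> 0" by (simp add: algebra_simps)
  then show ?thesis using a \<open>\<mu> < - L\<close> by (simp add: zero_le_mult_iff)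
qed

lemma dual_update_bounded:
  fixes g :: "real \<Rightarrow> real"
  assumes lip: "\<forall>a\<in>{0..1}. \<forall>b\<in>{0..1}. \<bar>g a - g b\<bar> \<le> L * \<bar>a - b\<bar>" and "0 \<le> L"
    and a: "a \<in> {0..1}" and argmin: "\<forall>b\<in>{0..1}. g a + \<mu> * a \<le> g b + \<mu> * b"
    and x: "x \<in> {0..1}" and "0 \<le> \<eta>" and bound: "\<bar>\<mu>\<bar> \<le> B" and margin: "L + \<eta> \<le> B"
  shows "\<bar>\<mu> + \<eta> * (a - x)\<bar> \<le> B"
proof -
  have step_le: "\<eta> * (a - x) \<le> \<eta>" and step_ge: "- \<eta> \<le> \<eta> * (a - x)"
    using mult_left_mono[of "a - x" 1 \<eta>] mult_left_mono[of "-1" "a - x" \<eta>] a x \<open>0 \<le> \<eta>\<close>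
    by auto
  consider "L < \<mu>" | "\<mu> < - L" | "\<bar>\<mu>\<bar> \<le> L" by linarith
  then show ?thesis
  proof cases
    case 1
    then have "\<eta> * (a - x) \<le> 0"
      using argmin_eq_0_if_price_gt_lipschitz[OF lip a argmin] x \<open>0 \<le> \<eta>\<close> by simp
    then show ?thesis using 1 step_ge \<open>0 \<le> L\<close> bound margin by linarith
  next
    case 2
    then have "0 \<le> \<eta> * (a - x)"
      using argmin_eq_1_if_price_lt_neg_lipschitz[OF lip a argmin] x \<open>0 \<le> \<eta>\<close> by simp
    then show ?thesis using 2 step_le \<open>0 \<le> L\<close> bound margin by linarith
  next
    case 3
    then show ?thesis using step_le step_ge bound margin by linarith
  qed
qed

lemma argmin_ge_target_if_price_nonpos:
  fixes g :: "real \<Rightarrow> real"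
  assumes "\<rho> \<in> {0..1}" and "g \<rho> = 0" and pos: "\<forall>b\<in>{0..<\<rho>}. 0 < g b"
    and a: "a \<in> {0..1}" and argmin: "\<forall>b\<in>{0..1}. g a + \<mu> * a \<le> g b + \<mu> * b"
    and "\<mu> \<le> 0"
  shows "\<rho> \<le> a"
proof (rule ccontr)
  assume "\<not> \<rho> \<le> a"
  have "g a \<le> \<mu> * (\<rho> - a)"
    using argmin \<open>\<rho> \<in> {0..1}\<close> \<open>g \<rho> = 0\<close> by (force simp: algebra_simps)
  also have "\<dots> \<le> 0"
    using \<open>\<not> \<rho> \<le> a\<close> \<open>\<mu> \<le> 0\<close> by (simp add: mult_le_0_iff)
  finally show False using pos a \<open>\<not> \<rho> \<le> a\<close> by force
qed

lemma is_run_initD: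
  assumes "is_run I T \<eta> \<mu>1 \<omega> (x, a, \<mu>)" and "k \<in> {1..nep I}" and "i < nres I"
  shows "\<mu> 1 k i = \<mu>1 k i"
  using assms by (simp add: is_run_def)

lemma is_run_stepD:
  assumes run: "is_run I T \<eta> \<mu>1 \<omega> (x, a, \<mu>)" and t: "t \<in> {1..T}"
  shows "feasible I \<omega> t (x t)"
    and "feasible I \<omega> t y \<Longrightarrow>
      (\<Sum>i<nres I. x t i * (cost I (\<omega> t) i - (\<Sum>k\<in>{epoch I T t..nep I}. \<mu> t k i)))
      \<le> (\<Sum>i<nres I. y i * (cost I (\<omega> t) i - (\<Sum>k\<in>{epoch I T t..nep I}. \<mu> t k i)))"
    and "k \<in> {epoch I T t..nep I} \<Longrightarrow> i < nres I \<Longrightarrow> a t k i \<in> {0..1}"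
    and "k \<in> {epoch I T t..nep I} \<Longrightarrow> i < nres I \<Longrightarrow>
      \<forall>b\<in>{0..1}. dev I k i (a t k i) + \<mu> t k i * a t k i \<le> dev I k i b + \<mu> t k i * b"
    and "k \<in> {epoch I T t..nep I} \<Longrightarrow> i < nres I \<Longrightarrow>
      \<mu> (Suc t) k i = \<mu> t k i + \<eta> * (a t k i - x t i)"
    and "k \<in> {1..<epoch I T t} \<Longrightarrow> i < nres I \<Longrightarrow> \<mu> (Suc t) k i = \<mu> t k i"
  using run t unfolding is_run_def by auto

lemma run_price_bounded:
  assumes I: "valid_instance I" and run: "is_run I T \<eta> \<mu>1 \<omega> (x, a, \<mu>)" and "0 \<le> \<eta>"
    and k: "k \<in> {1..nep I}" and i: "i < nres I" and "t \<in> {1..Suc T}"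
  shows "\<bar>\<mu> t k i\<bar> \<le> \<bar>\<mu>1 k i\<bar> + lip I + \<eta>"
  using \<open>t \<in> {1..Suc T}\<close>
proof (induction t)
  case 0
  then show ?case by simp
next
  case (Suc t)
  show ?case
  proof (cases "t = 0")
    case True
    then show ?thesis
      using is_run_initD[OF run k i] I \<open>0 \<le> \<eta>\<close> by (simp add: valid_instance_def)
  next
    case False
    then have t: "t \<in> {1..T}" and IH: "\<bar>\<mu> t k i\<bar> \<le> \<bar>\<mu>1 k i\<bar> + lip I + \<eta>"
      using Suc by auto
    show ?thesis
    proof (cases "epoch I T t \<le> k")
      case True
      then have k': "k \<in> {epoch I T t..nep I}" using k by simp
      have "x t i \<in> {0..1}"
        using is_run_stepD(1)[OF run t] i by (auto simp: feasible_def)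
      moreover have "\<forall>a\<in>{0..1}. \<forall>b\<in>{0..1}. \<bar>dev I k i a - dev I k i b\<bar> \<le> lip I * \<bar>a - b\<bar>"
        and "0 \<le> lip I"
        using I k i by (auto simp: valid_instance_def)
      ultimately show ?thesis
        unfolding is_run_stepD(5)[OF run t k' i]
        using dual_update_bounded[OF _ _ is_run_stepD(3,4)[OF run t k' i] _ \<open>0 \<le> \<eta>\<close> IH]
        by simp
    next
      case False
      then show ?thesis
        using is_run_stepD(6)[OF run t _ i] k IH by simp
    qed
  qed
qed

lemma sum_split_halves:
  "(\<Sum>t\<in>{1..2*h}. f t) = (\<Sum>t\<in>{1..h}. f t) + (\<Sum>t\<in>{h+1..2*h::nat}. f t)"
proof -
  have "{1..2*h} = {1..h} \<union> {h+1..2*h}" by auto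
  then show ?thesis by (simp add: sum.union_disjoint)
qed

definition bad_instance :: pd_instance where
  "bad_instance =
     \<lparr>nres = 1, ntyp = 1, nep = 2, cost = (\<lambda>j i. 0), allowed = (\<lambda>j. {0}), prob = (\<lambda>j. 1),
      target = (\<lambda>k i. if k = 1 then 1 else 1/2),
      dev = (\<lambda>k i a. if k = 1 then 1 - a else \<bar>1/2 - a\<bar>), lip = 1\<rparr>"

lemma valid_bad_instance: "valid_instance bad_instance"
proof -
  have "convex_on {0..1} (\<lambda>a::real. 1 - a)"
    by (rule convex_on_linorderI) (auto simp: algebra_simps)
  moreover have "convex_on {0..1} (\<lambda>a::real. \<bar>1/2 - a\<bar>)"
    using convex_on_dist[of _ "1/2::real"] by (simp add: dist_real_def)
  moreover have "{1..2::nat} = {1, 2}" by auto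
  ultimately show ?thesis
    unfolding valid_instance_def bad_instance_def by (auto simp: abs_le_iff)
qed

lemma feasible_bad_instance: "feasible bad_instance \<omega> t y \<longleftrightarrow> y 0 \<in> {0, 1}"
  by (auto simp: feasible_def bad_instance_def)

lemma epoch_bad_instance_second_half:
  assumes "t \<in> {h+1..2*h}"
  shows "epoch bad_instance (2*h) t = 2"
proof -
  have "(t - 1) div h = 1" using assms by (intro div_nat_eqI) auto
  then show ?thesis by (simp add: epoch_def bad_instance_def)
qed

lemma total_cost_bad_instance:
  assumes "h > 0"
  shows "total_cost bad_instance (2*h) \<omega> x =
    real h - (\<Sum>t\<in>{1..h}. x t 0) + \<bar>real h - (\<Sum>t\<in>{1..2*h}. x t 0)\<bar>"
proof -
  have "{1..2::nat} = {1, 2}" by auto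
  then have "total_cost bad_instance (2*h) \<omega> x =
      real h * (1 - (\<Sum>t\<in>{1..h}. x t 0) / real h)
      + 2 * real h * \<bar>1/2 - (\<Sum>t\<in>{1..2*h}. x t 0) / (2 * real h)\<bar>"
    by (simp add: total_cost_def bad_instance_def ring_distribs)
  also have "2 * real h * \<bar>1/2 - (\<Sum>t\<in>{1..2*h}. x t 0) / (2 * real h)\<bar>
      = \<bar>real h - (\<Sum>t\<in>{1..2*h}. x t 0)\<bar>"
    using assms by (simp add: abs_mult[symmetric] field_simps)
  also have "real h * (1 - (\<Sum>t\<in>{1..h}. x t 0) / real h) = real h - (\<Sum>t\<in>{1..h}. x t 0)"
    using assms by (simp add: field_simps)
  finally show ?thesis .
qed

lemma total_cost_bad_instance_ge:
  assumes "h > 0"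
  shows "(\<Sum>t\<in>{h+1..2*h}. x t 0) \<le> total_cost bad_instance (2*h) \<omega> x"
  unfolding total_cost_bad_instance[OF assms] sum_split_halves by linarith

lemma offline_opt_bad_instance_le_0:
  assumes "h > 0"
  shows "offline_opt bad_instance (2*h) \<omega> \<le> 0"
proof -
  define x0 :: "nat \<Rightarrow> nat \<Rightarrow> real" where "x0 t i = (if t \<le> h then 1 else 0)" for t i
  have feasible_x0: "\<forall>t\<in>{1..2*h}. feasible bad_instance \<omega> t (x0 t)"
    by (simp add: feasible_bad_instance x0_def)
  have "total_cost bad_instance (2*h) \<omega> x0 = 0"
    unfolding total_cost_bad_instance[OF assms] sum_split_halves by (simp add: x0_def)
  moreover have "bdd_below {total_cost bad_instance (2*h) \<omega> x | x.
      \<forall>t\<in>{1..2*h}. feasible bad_instance \<omega> t (x t)}"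
  proof (rule bdd_belowI[of _ 0], clarify)
    fix x assume feasible: "\<forall>t\<in>{1..2*h}. feasible bad_instance \<omega> t (x t)"
    have "0 \<le> x t 0" if "t \<in> {h+1..2*h}" for t
      using feasible[rule_format, of t] that by (auto simp: feasible_bad_instance)
    then have "0 \<le> (\<Sum>t\<in>{h+1..2*h}. x t 0)"
      by (rule sum_nonneg)
    then show "0 \<le> total_cost bad_instance (2*h) \<omega> x"
      using total_cost_bad_instance_ge[OF assms] by (rule order_trans)
  qed
  then have "offline_opt bad_instance (2*h) \<omega> \<le> total_cost bad_instance (2*h) \<omega> x0"
    unfolding offline_opt_def by (rule cInf_lower[rotated]) (use feasible_x0 in blast)
  ultimately show ?thesis by simp
qed

lemma bad_run_price_drift:
  assumes run: "is_run bad_instance (2*h) \<eta> \<mu>1 \<omega> (x, a, \<mu>)" and "0 \<le> \<eta>"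
    and t: "t \<in> {h+1..2*h}"
  shows "\<eta>/2 - 3*\<eta>/2 * x t 0 \<le> \<mu> (Suc t) 2 0 - \<mu> t 2 0"
proof -
  have t': "t \<in> {1..2*h}" and k: "2 \<in> {epoch bad_instance (2*h) t..nep bad_instance}"
    and nres: "0 < nres bad_instance"
    using t epoch_bad_instance_second_half[OF t] by (auto simp: bad_instance_def)
  have update: "\<mu> (Suc t) 2 0 - \<mu> t 2 0 = \<eta> * (a t 2 0 - x t 0)"
    using is_run_stepD(5)[OF run t' k nres] by simp
  have a: "a t 2 0 \<in> {0..1}"
    and argmin: "\<forall>b\<in>{0..1}. \<bar>1/2 - a t 2 0\<bar> + \<mu> t 2 0 * a t 2 0 \<le> \<bar>1/2 - b\<bar> + \<mu> t 2 0 * b"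
    using is_run_stepD(3,4)[OF run t' k nres] by (simp_all add: bad_instance_def)
  have "x t 0 \<in> {0, 1}"
    using is_run_stepD(1)[OF run t'] by (simp add: feasible_bad_instance)
  then consider "x t 0 = 0" | "x t 0 = 1" by blast
  then show ?thesis
  proof cases
    case 1
    have "feasible bad_instance \<omega> t (\<lambda>_. 1)" by (simp add: feasible_bad_instance)
    from is_run_stepD(2)[OF run t' this] have "\<mu> t 2 0 \<le> 0"
      using 1 epoch_bad_instance_second_half[OF t] by (simp add: bad_instance_def)
    then have "1/2 \<le> a t 2 0"
      by (intro argmin_ge_target_if_price_nonpos[OF _ _ _ a argmin]) auto
    then show ?thesis
      using 1 update mult_left_mono[of "1/2" "a t 2 0" \<eta>] \<open>0 \<le> \<eta>\<close> by simp
  next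
    case 2
    then show ?thesis
      using update mult_left_mono[of 0 "a t 2 0" \<eta>] a \<open>0 \<le> \<eta>\<close> by (simp add: algebra_simps)
  qed
qed

lemma bad_run_serves_in_second_epoch:
  assumes run: "is_run bad_instance (2*h) \<eta> \<mu>1 \<omega> (x, a, \<mu>)" and "0 < \<eta>"
    and h: "8 * (\<bar>\<mu>1 2 0\<bar> + 1 + \<eta>) \<le> \<eta> * real h"
  shows "real h / 6 \<le> (\<Sum>t\<in>{h+1..2*h}. x t 0)"
proof -
  define B where "B = \<bar>\<mu>1 2 0\<bar> + 1 + \<eta>"
  have bounded: "\<bar>\<mu> t 2 0\<bar> \<le> B" if "t \<in> {1..Suc (2*h)}" for t
    using run_price_bounded[OF valid_bad_instance run _ _ _ that] \<open>0 < \<eta>\<close>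
    by (simp add: B_def bad_instance_def)
  have "\<eta>/2 * real h - 3*\<eta>/2 * (\<Sum>t\<in>{h+1..2*h}. x t 0)
      = (\<Sum>t\<in>{h+1..2*h}. \<eta>/2 - 3*\<eta>/2 * x t 0)"
    by (simp add: sum_subtractf sum_distrib_left)
  also have "\<dots> \<le> (\<Sum>t\<in>{h+1..2*h}. \<mu> (Suc t) 2 0 - \<mu> t 2 0)"
    using bad_run_price_drift[OF run] \<open>0 < \<eta>\<close> by (intro sum_mono) simp
  also have "\<dots> = \<mu> (Suc (2*h)) 2 0 - \<mu> (h+1) 2 0"
    by (rule sum_Suc_diff) simp
  also have "\<dots> \<le> 2 * B"
    using bounded[of "Suc (2*h)"] bounded[of "h+1"] by auto
  finally have "\<eta> * (real h / 6) \<le> \<eta> * (\<Sum>t\<in>{h+1..2*h}. x t 0)"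
    using h unfolding B_def by (simp add: algebra_simps)
  then show ?thesis
    using \<open>0 < \<eta>\<close> by simp
qed

lemma bad_run_regret_ge:
  assumes run: "is_run bad_instance (2*h) \<eta> \<mu>1 \<omega> (x, a, \<mu>)" and "0 < \<eta>"
    and h: "8 * (\<bar>\<mu>1 2 0\<bar> + 1 + \<eta>) \<le> \<eta> * real h"
  shows "real h / 6 \<le> total_cost bad_instance (2*h) \<omega> x - offline_opt bad_instance (2*h) \<omega>"
proof -
  have "h > 0"
    using h \<open>0 < \<eta>\<close> by (cases h) auto
  then show ?thesis
    using bad_run_serves_in_second_epoch[OF assms] total_cost_bad_instance_ge[of h x \<omega>]
      offline_opt_bad_instance_le_0[of h \<omega>]
    by linarith
qed

lemma expected_regret_bad_instance_ge:
  assumes "0 < \<eta>" and "8 * (\<bar>\<mu>1 2 0\<bar> + 1 + \<eta>) \<le> \<eta> * real h"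
    and runs: "\<forall>\<omega>\<in>arrivals bad_instance (2*h). is_run bad_instance (2*h) \<eta> \<mu>1 \<omega> (run \<omega>)"
  shows "real h / 6 \<le> expected_regret bad_instance (2*h) run"
proof (rule expected_regret_ge[OF valid_bad_instance])
  fix \<omega> assume "\<omega> \<in> arrivals bad_instance (2*h)"
  moreover obtain x a \<mu> where run: "run \<omega> = (x, a, \<mu>)" by (cases "run \<omega>")
  ultimately have "is_run bad_instance (2*h) \<eta> \<mu>1 \<omega> (x, a, \<mu>)"
    using runs by metis
  from bad_run_regret_ge[OF this assms(1,2)]
  show "real h / 6 \<le> total_cost bad_instance (2*h) \<omega> (fst (run \<omega>)) - offline_opt bad_instance (2*h) \<omega>"
    unfolding run by simp
qed

theorem proposition2:
  shows "\<exists>I. valid_instance I \<and>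
    (\<forall>\<eta>>0. \<forall>\<mu>1. \<exists>C>0. \<exists>T0::nat. \<forall>T run.
       T \<ge> T0 \<and> nep I dvd T \<and> (\<forall>\<omega>\<in>arrivals I T. is_run I T \<eta> \<mu>1 \<omega> (run \<omega>))
       \<longrightarrow> expected_regret I T run \<ge> C * real T)"
proof (intro exI[of _ bad_instance] conjI valid_bad_instance allI impI, goal_cases)
  case (1 \<eta> \<mu>1)
  define T0 where "T0 = 2 * nat \<lceil>8 * (\<bar>\<mu>1 2 0\<bar> + 1 + \<eta>) / \<eta>\<rceil>"
  show ?case
  proof (intro exI[of _ "1/12"] exI[of _ T0] conjI allI impI; (elim conjE)?)
    fix T run
    assume "T0 \<le> T" and "nep bad_instance dvd T"
      and runs: "\<forall>\<omega>\<in>arrivals bad_instance T. is_run bad_instance T \<eta> \<mu>1 \<omega> (run \<omega>)"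
    obtain h where T: "T = 2 * h"
      using \<open>nep bad_instance dvd T\<close> by (auto simp: bad_instance_def)
    have "8 * (\<bar>\<mu>1 2 0\<bar> + 1 + \<eta>) / \<eta> \<le> real h"
      using \<open>T0 \<le> T\<close> unfolding T T0_def by linarith
    then have "8 * (\<bar>\<mu>1 2 0\<bar> + 1 + \<eta>) \<le> \<eta> * real h"
      using \<open>0 < \<eta>\<close> by (simp add: pos_divide_le_eq mult.commute)
    with \<open>0 < \<eta>\<close> runs have "real h / 6 \<le> expected_regret bad_instance (2*h) run"
      unfolding T by (intro expected_regret_bad_instance_ge)
    then show "1/12 * real T \<le> expected_regret bad_instance T run"
      unfolding T by simp
  qed simp
qed

end
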